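(* For every integer $s\geq1$, \[ \sum_{n_1\geq\cdots\geq n_s\geq n_{s+1}\geq2}\frac{1}{n_1(n_1-1)\cdots n_s(n_s-1)\,n_{s+1}}\leq\frac{1}{2^{s+1}}\prod_{l\geq3}\frac{1}{1-\frac{2}{l(l-1)}}+\zeta^{\star}(\{2\}^s,1)-\zeta^{\star}(\{2\}^s). \]
   Context: $\zeta^{\star}(k_1,\ldots,k_r)=\sum_{n_1\geq\cdots\geq n_r\geq 1}\frac{1}{n_1^{k_1}\cdots n_r^{k_r}}$ for $k_1\geq2$, $k_2,\ldots,k_r\geq1$; $\{2\}^s$ denotes $s$ consecutive arguments equal to $2$. *)

theory Defs
  imports "HOL-Analysis.Analysis"
begin

text \<open>Admissible (convergent) when k_1 \<ge> 2 and all k_i \<ge> 1.\<close>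

definition zeta_star_dom :: "nat \<Rightarrow> nat list set" where
  "zeta_star_dom r = {ns. length ns = r \<and> sorted_wrt (\<ge>) ns \<and> (\<forall>n\<in>set ns. n \<ge> 1)}"

definition zeta_star :: "nat list \<Rightarrow> real" where
  "zeta_star ks = (\<Sum>\<^sub>\<infinity> ns \<in> zeta_star_dom (length ks).
      \<Prod>i<length ks. 1 / (real (ns ! i)) ^ (ks ! i))"

end

theory Submission
  imports Defs "HOL-Real_Asymp.Real_Asymp"
begin

text \<open>
  Let S_f(k, m) be the sum of f(n_1) \<cdots> f(n_k) over n_1 \<ge> \<dots> \<ge> n_k \<ge> m, and let
  a(n) = 1/(n(n-1)) and b(n) = 1/n^2. Summing over the last index first, the left-hand side is
  the sum of S_a(s, m)/m over m \<ge> 2, while the sum of S_b(s, m)/m over m \<ge> 1 is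
  \<zeta>*({2}^s, 1), whose term m = 1 is \<zeta>*({2}^s).

  For m \<ge> 3, lowering every index by one and using a(n+1) \<le> b(n) gives
  S_a(s, m)/m \<le> S_b(s, m-1)/(m-1), so these terms are dominated by the zeta-star difference.
  For m = 2, peeling off the indices equal to 2 (where a(2) = 1/2) gives
  2^s S_a(s, 2) = \<Sum>_{k \<le> s} 2^k S_a(k, 3), and \<Sum>_{k \<le> K} 2^k S_a(k, m) \<le> m/(m-2)
  for m \<ge> 3 by induction on K, because 2 a(n) n/(n-2) = 2/(n-2) - 2/(n-1) telescopes. So the term m = 2
  is at most 3/2^(s+1), while the infinite product is 3, its partial products being
  3(L+2)/(L+4).
\<close>

section \<open>Infinite sums of extended nonnegative reals\<close>

(* The library fact summable_on_ennreal is, by coercion inference, about ennreal_of_enat \<circ> f. *)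
lemma ennreal_summable_on [simp]: "(f :: 'a \<Rightarrow> ennreal) summable_on A"
  by (simp add: nonneg_summable_on_complete)

(* The library's Fubini lemmas are stated for uniform or t3 spaces; ennreal is registered as neither. *)
lemma infsum_Sigma_ennreal_finite:
  fixes f :: "'a \<times> 'b \<Rightarrow> ennreal"
  assumes "finite A"
  shows "infsum f (Sigma A B) = (\<Sum>x\<in>A. \<Sum>\<^sub>\<infinity>y\<in>B x. f (x, y))"
  using assms
proof (induction A rule: finite_induct)
  case (insert x A)
  have "Sigma (insert x A) B = Pair x ` B x \<union> Sigma A B" by auto
  then have "infsum f (Sigma (insert x A) B) = infsum f (Pair x ` B x) + infsum f (Sigma A B)"
    using insert.hyps by (simp only:) (intro infsum_Un_disjoint; auto)
  also have "infsum f (Pair x ` B x) = (\<Sum>\<^sub>\<infinity>y\<in>B x. f (x, y))"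
    by (simp add: infsum_reindex inj_on_def o_def)
  finally show ?case using insert by simp
qed simp

lemma infsum_Sigma_ennreal:
  fixes f :: "'a \<times> 'b \<Rightarrow> ennreal"
  shows "infsum f (Sigma A B) = (\<Sum>\<^sub>\<infinity>x\<in>A. \<Sum>\<^sub>\<infinity>y\<in>B x. f (x, y))"
proof (rule antisym)
  show "infsum f (Sigma A B) \<le> (\<Sum>\<^sub>\<infinity>x\<in>A. \<Sum>\<^sub>\<infinity>y\<in>B x. f (x, y))"
  proof (rule infsum_le_finite_sums)
    fix H assume H: "finite H" "H \<subseteq> Sigma A B"
    have "sum f H = infsum f H" using H by simp
    also have "\<dots> \<le> infsum f (Sigma (fst ` H) B)"
      using H by (intro infsum_mono_neutral) force+
    also have "\<dots> = (\<Sum>\<^sub>\<infinity>x\<in>fst ` H. \<Sum>\<^sub>\<infinity>y\<in>B x. f (x, y))"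
      using H by (simp add: infsum_Sigma_ennreal_finite)
    also have "\<dots> \<le> (\<Sum>\<^sub>\<infinity>x\<in>A. \<Sum>\<^sub>\<infinity>y\<in>B x. f (x, y))"
      using H by (intro infsum_mono_neutral) force+
    finally show "sum f H \<le> (\<Sum>\<^sub>\<infinity>x\<in>A. \<Sum>\<^sub>\<infinity>y\<in>B x. f (x, y))" .
  qed simp
  show "(\<Sum>\<^sub>\<infinity>x\<in>A. \<Sum>\<^sub>\<infinity>y\<in>B x. f (x, y)) \<le> infsum f (Sigma A B)"
  proof (rule infsum_le_finite_sums)
    fix F assume F: "finite F" "F \<subseteq> A"
    then have "(\<Sum>x\<in>F. \<Sum>\<^sub>\<infinity>y\<in>B x. f (x, y)) = infsum f (Sigma F B)"
      by (simp add: infsum_Sigma_ennreal_finite)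
    also have "\<dots> \<le> infsum f (Sigma A B)"
      using F by (intro infsum_mono_neutral) auto
    finally show "(\<Sum>x\<in>F. \<Sum>\<^sub>\<infinity>y\<in>B x. f (x, y)) \<le> infsum f (Sigma A B)" .
  qed simp
qed

lemma infsum_cmult_right_ennreal:
  fixes f :: "'a \<Rightarrow> ennreal"
  shows "(\<Sum>\<^sub>\<infinity>x\<in>A. c * f x) = c * infsum f A"
proof -
  have "(\<Sum>\<^sub>\<infinity>x\<in>A. c * f x) = (SUP F\<in>{F. finite F \<and> F \<subseteq> A}. c * sum f F)"
    by (simp add: nonneg_infsum_complete sum_distrib_left)
  also have "\<dots> = c * infsum f A"
    by (simp add: nonneg_infsum_complete SUP_mult_left_ennreal)
  finally show ?thesis .
qed

lemma sum_infsum_ennreal: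
  fixes f :: "'i \<Rightarrow> 'a \<Rightarrow> ennreal"
  shows "(\<Sum>k\<in>K. infsum (f k) A) = (\<Sum>\<^sub>\<infinity>x\<in>A. \<Sum>k\<in>K. f k x)"
proof (induction K rule: infinite_finite_induct)
  case (insert k K)
  then show ?case by (simp add: infsum_add)
qed simp_all

lemma infsum_atLeast_ennreal:
  fixes f :: "nat \<Rightarrow> ennreal"
  shows "infsum f {m..} = f m + infsum f {Suc m..}"
proof -
  have "{m..} = insert m {Suc m..}" by auto
  then show ?thesis by (simp add: infsum_insert)
qed

lemma infsum_telescoping_le_ennreal:
  fixes g t :: "nat \<Rightarrow> real"
  assumes g_nonneg: "\<And>n. n \<ge> m \<Longrightarrow> 0 \<le> g n"
    and g_le: "\<And>n. n \<ge> m \<Longrightarrow> g n \<le> t n - t (Suc n)"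
    and t_nonneg: "\<And>n. n \<ge> m \<Longrightarrow> 0 \<le> t n"
  shows "(\<Sum>\<^sub>\<infinity>n\<in>{m..}. ennreal (g n)) \<le> ennreal (t m)"
proof (rule infsum_le_finite_sums)
  have partial: "(\<Sum>n\<in>{m..<m+N}. g n) \<le> t m - t (m+N)" for N
  proof (induction N)
    case (Suc N)
    then show ?case using g_le[of "m + N"] by simp
  qed simp
  fix F assume F: "finite F" "F \<subseteq> {m..}"
  define N where "N = Suc (Max F)"
  have "F \<subseteq> {m..<m+N}"
  proof
    fix x assume "x \<in> F"
    with F have "m \<le> x" "x \<le> Max F" by auto
    then show "x \<in> {m..<m+N}" by (simp add: N_def)
  qed
  then have "sum (\<lambda>n. ennreal (g n)) F \<le> sum (\<lambda>n. ennreal (g n)) {m..<m+N}"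
    by (intro sum_mono2) auto
  also have "\<dots> = ennreal (\<Sum>n\<in>{m..<m+N}. g n)"
    using g_nonneg by (intro sum_ennreal) auto
  also have "\<dots> \<le> ennreal (t m)"
    using partial[of N] t_nonneg[of "m+N"] by (intro ennreal_leI) simp
  finally show "sum (\<lambda>n. ennreal (g n)) F \<le> ennreal (t m)" .
qed simp

lemma ennreal_infsum:
  fixes h :: "'a \<Rightarrow> real"
  assumes nonneg: "\<And>x. x \<in> A \<Longrightarrow> h x \<ge> 0"
    and finite: "(\<Sum>\<^sub>\<infinity>x\<in>A. ennreal (h x)) < top"
  shows "ennreal (infsum h A) = (\<Sum>\<^sub>\<infinity>x\<in>A. ennreal (h x))"
proof -
  have sum_eq: "ennreal (sum h F) = (\<Sum>x\<in>F. ennreal (h x))" if "F \<subseteq> A" for F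
    using nonneg that by (subst sum_ennreal) auto
  have "bdd_above (sum h ` {F. F \<subseteq> A \<and> finite F})"
  proof (rule bdd_aboveI, clarify)
    fix F assume F: "F \<subseteq> A" "finite F"
    have "ennreal (sum h F) = (\<Sum>\<^sub>\<infinity>x\<in>F. ennreal (h x))"
      using F by (simp add: sum_eq)
    also have "\<dots> \<le> (\<Sum>\<^sub>\<infinity>x\<in>A. ennreal (h x))"
      using F by (intro infsum_mono_neutral) auto
    finally have "ennreal (sum h F) \<le> (\<Sum>\<^sub>\<infinity>x\<in>A. ennreal (h x))" .
    then show "sum h F \<le> enn2real (\<Sum>\<^sub>\<infinity>x\<in>A. ennreal (h x))"
      using F nonneg finite by (metis enn2real_ennreal enn2real_mono subsetD sum_nonneg)
  qed
  with nonneg have "h summable_on A"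
    by (rule nonneg_bdd_above_summable_on)
  then have "ennreal (infsum h A) = (SUP F\<in>{F. finite F \<and> F \<subseteq> A}. ennreal (sum h F))"
    using nonneg by (rule infsum_nonneg_is_SUPREMUM_ennreal)
  also have "\<dots> = (\<Sum>\<^sub>\<infinity>x\<in>A. ennreal (h x))"
    by (subst nonneg_infsum_complete) (auto intro!: SUP_cong simp: sum_eq)
  finally show ?thesis .
qed

section \<open>Nested sums over weakly decreasing lists\<close>

definition dec_lists :: "nat \<Rightarrow> nat \<Rightarrow> nat list set" where
  "dec_lists k m = {ns. length ns = k \<and> sorted_wrt (\<ge>) ns \<and> (\<forall>n\<in>set ns. m \<le> n)}"

definition nested_sum :: "(nat \<Rightarrow> real) \<Rightarrow> nat \<Rightarrow> nat \<Rightarrow> ennreal" where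
  "nested_sum f k m = (\<Sum>\<^sub>\<infinity>ns\<in>dec_lists k m. ennreal (\<Prod>i<k. f (ns ! i)))"

lemma dec_lists_0: "dec_lists 0 m = {[]}"
  by (auto simp: dec_lists_def)

lemma dec_lists_Suc_conv_last:
  "dec_lists (Suc k) m = {ns. length ns = Suc k \<and> sorted_wrt (\<ge>) ns \<and> m \<le> ns ! k}"
proof (intro set_eqI iffI)
  fix ns assume "ns \<in> {ns. length ns = Suc k \<and> sorted_wrt (\<ge>) ns \<and> m \<le> ns ! k}"
  then have ns: "length ns = Suc k" "sorted_wrt (\<ge>) ns" "m \<le> ns ! k" by auto
  have "m \<le> ns ! i" if "i < Suc k" for i
    using ns sorted_wrt_nth_less[OF ns(2), of i k] that by (cases "i = k") auto
  with ns show "ns \<in> dec_lists (Suc k) m"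
    by (auto simp: dec_lists_def in_set_conv_nth)
qed (auto simp: dec_lists_def)

lemma bij_betw_snoc_dec_lists:
  "bij_betw (\<lambda>(n, ns). ns @ [n]) (SIGMA n:{m..}. dec_lists k n) (dec_lists (Suc k) m)"
proof (rule bij_betwI')
  show "(\<lambda>(n, ns). ns @ [n]) p \<in> dec_lists (Suc k) m"
    if "p \<in> (SIGMA n:{m..}. dec_lists k n)" for p
    using that by (fastforce simp: dec_lists_def sorted_wrt_append)
  show "\<exists>p\<in>SIGMA n:{m..}. dec_lists k n. ns = (\<lambda>(n, ns). ns @ [n]) p"
    if "ns \<in> dec_lists (Suc k) m" for ns
  proof -
    from that have ns: "length ns = Suc k" "sorted_wrt (\<ge>) ns" "\<forall>n\<in>set ns. m \<le> n"
      by (auto simp: dec_lists_def)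
    then have snoc: "ns = butlast ns @ [last ns]" by (cases ns rule: rev_cases) auto
    with ns(2) have "sorted_wrt (\<ge>) (butlast ns @ [last ns])" by simp
    then have "sorted_wrt (\<ge>) (butlast ns)" "\<forall>n\<in>set (butlast ns). last ns \<le> n"
      by (simp_all add: sorted_wrt_append)
    moreover have "m \<le> last ns" using ns snoc by (cases ns rule: rev_cases) auto
    ultimately have "(last ns, butlast ns) \<in> (SIGMA n:{m..}. dec_lists k n)"
      using ns by (auto simp: dec_lists_def)
    with snoc show ?thesis by force
  qed
qed auto

lemma infsum_dec_lists_Suc:
  fixes F :: "nat list \<Rightarrow> ennreal"
  shows "infsum F (dec_lists (Suc k) m) = (\<Sum>\<^sub>\<infinity>n\<in>{m..}. \<Sum>\<^sub>\<infinity>ns\<in>dec_lists k n. F (ns @ [n]))"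
  by (simp add: infsum_reindex_bij_betw[OF bij_betw_snoc_dec_lists, symmetric]
      infsum_Sigma_ennreal)

lemma bij_betw_map_Suc_dec_lists: "bij_betw (map Suc) (dec_lists k m) (dec_lists k (Suc m))"
proof (rule bij_betwI[where g = "map (\<lambda>n. n - 1)"])
  show "map (\<lambda>n. n - 1) \<in> dec_lists k (Suc m) \<rightarrow> dec_lists k m"
  proof
    fix ns assume "ns \<in> dec_lists k (Suc m)"
    then have "sorted_wrt (\<ge>) ns" "\<forall>n\<in>set ns. Suc m \<le> n" "length ns = k"
      by (auto simp: dec_lists_def)
    then show "map (\<lambda>n. n - 1) ns \<in> dec_lists k m"
      unfolding dec_lists_def by (auto simp: sorted_wrt_map elim!: sorted_wrt_mono_rel[rotated])
  qed
qed (auto simp: dec_lists_def sorted_wrt_map intro!: map_idI)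

lemma nested_sum_0 [simp]: "nested_sum f 0 m = 1"
  by (simp add: nested_sum_def dec_lists_0)

lemma infsum_dec_lists_Suc_prod:
  assumes "\<And>n. f n \<ge> 0" and "\<And>n. g n \<ge> 0"
  shows "(\<Sum>\<^sub>\<infinity>ns\<in>dec_lists (Suc k) m. ennreal ((\<Prod>i<k. f (ns ! i)) * g (ns ! k)))
       = (\<Sum>\<^sub>\<infinity>n\<in>{m..}. ennreal (g n) * nested_sum f k n)"
proof -
  have "ennreal ((\<Prod>i<k. f ((ns @ [n]) ! i)) * g ((ns @ [n]) ! k))
      = ennreal (g n) * ennreal (\<Prod>i<k. f (ns ! i))" if "ns \<in> dec_lists k n" for n ns
    using that assms by (simp add: dec_lists_def nth_append ennreal_mult' prod_nonneg mult.commute)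
  then show ?thesis
    by (simp add: infsum_dec_lists_Suc nested_sum_def infsum_cmult_right_ennreal cong: infsum_cong)
qed

lemma nested_sum_Suc:
  assumes "\<And>n. f n \<ge> 0"
  shows "nested_sum f (Suc k) m = (\<Sum>\<^sub>\<infinity>n\<in>{m..}. ennreal (f n) * nested_sum f k n)"
  using infsum_dec_lists_Suc_prod[OF assms assms] by (simp add: nested_sum_def)

lemma nested_sum_Suc_split:
  assumes "\<And>n. f n \<ge> 0"
  shows "nested_sum f (Suc k) m = ennreal (f m) * nested_sum f k m + nested_sum f (Suc k) (Suc m)"
  by (simp add: nested_sum_Suc[OF assms] infsum_atLeast_ennreal[of _ m])

lemma nested_sum_shift_le:
  assumes "\<And>n. f n \<ge> 0" and "\<And>n. n \<ge> m \<Longrightarrow> f (Suc n) \<le> g n"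
  shows "nested_sum f k (Suc m) \<le> nested_sum g k m"
proof -
  have "nested_sum f k (Suc m) = (\<Sum>\<^sub>\<infinity>ns\<in>dec_lists k m. ennreal (\<Prod>i<k. f (map Suc ns ! i)))"
    unfolding nested_sum_def
    by (rule infsum_reindex_bij_betw[OF bij_betw_map_Suc_dec_lists, symmetric])
  also have "\<dots> \<le> nested_sum g k m"
    unfolding nested_sum_def
  proof (rule infsum_mono)
    fix ns assume ns: "ns \<in> dec_lists k m"
    have "f (map Suc ns ! i) \<le> g (ns ! i)" if "i < k" for i
      using ns that assms(2)[of "ns ! i"] by (auto simp: dec_lists_def)
    then show "ennreal (\<Prod>i<k. f (map Suc ns ! i)) \<le> ennreal (\<Prod>i<k. g (ns ! i))"
      using assms(1) by (intro ennreal_leI prod_mono) auto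
  qed simp_all
  finally show ?thesis .
qed

section \<open>The weights 1/n^2 and 1/(n(n-1))\<close>

definition inv_sq :: "nat \<Rightarrow> real" where
  "inv_sq n = 1 / real n ^ 2"

definition inv_prod_pred :: "nat \<Rightarrow> real" where
  "inv_prod_pred n = 1 / (real n * (real n - 1))"

lemma inv_sq_nonneg: "inv_sq n \<ge> 0"
  by (simp add: inv_sq_def)

lemma inv_prod_pred_nonneg: "inv_prod_pred n \<ge> 0"
  by (cases n) (auto simp: inv_prod_pred_def)

lemma inv_prod_pred_Suc_le: "n \<ge> 1 \<Longrightarrow> inv_prod_pred (Suc n) \<le> inv_sq n"
  by (simp add: inv_prod_pred_def inv_sq_def power2_eq_square frac_le)

lemma infsum_inv_sq_le:
  assumes "m \<ge> 1"
  shows "(\<Sum>\<^sub>\<infinity>n\<in>{m..}. ennreal (inv_sq n)) \<le> ennreal (2 / real m)"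
proof (rule infsum_telescoping_le_ennreal)
  fix n assume "m \<le> n"
  then have n: "real n \<ge> 1" using assms by linarith
  have "real n * (real n + 1) \<le> 2 * real n ^ 2"
    using n by (simp add: power2_eq_square algebra_simps)
  then have "inv_sq n \<le> 2 / (real n * (real n + 1))"
    using n by (simp add: inv_sq_def divide_simps)
  also have "\<dots> = 2 / real n - 2 / real (Suc n)"
    using n by (simp add: field_simps)
  finally show "inv_sq n \<le> 2 / real n - 2 / real (Suc n)" .
qed (simp_all add: inv_sq_nonneg)

lemma nested_sum_inv_sq_Suc_le:
  assumes "m \<ge> 1" and "\<And>n. n \<ge> m \<Longrightarrow> nested_sum inv_sq k n \<le> C"
  shows "nested_sum inv_sq (Suc k) m \<le> C * ennreal (2 / real m)"
proof -
  have "nested_sum inv_sq (Suc k) m \<le> (\<Sum>\<^sub>\<infinity>n\<in>{m..}. C * ennreal (inv_sq n))"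
    using assms(2)
    by (auto simp: nested_sum_Suc inv_sq_nonneg mult.commute[of C] intro!: infsum_mono mult_left_mono)
  also have "\<dots> \<le> C * ennreal (2 / real m)"
    using infsum_inv_sq_le[OF assms(1)] by (simp add: infsum_cmult_right_ennreal mult_left_mono)
  finally show ?thesis .
qed

lemma nested_sum_inv_sq_le:
  assumes "m \<ge> 1"
  shows "nested_sum inv_sq k m \<le> 2 ^ k"
  using assms
proof (induction k arbitrary: m)
  case (Suc k)
  then have "nested_sum inv_sq (Suc k) m \<le> 2 ^ k * ennreal (2 / real m)"
    by (intro nested_sum_inv_sq_Suc_le) auto
  also have "\<dots> \<le> 2 ^ k * ennreal 2"
    using Suc.prems by (intro mult_left_mono ennreal_leI) (simp_all add: field_simps)
  finally show ?case by (simp add: mult.commute)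
qed simp

lemma infsum_nested_sum_inv_sq_finite:
  "(\<Sum>\<^sub>\<infinity>m\<in>{1..}. ennreal (1 / real m) * nested_sum inv_sq (Suc k) m) < top"
proof -
  have "nested_sum inv_sq (Suc k) m \<le> 2 ^ k * ennreal (2 / real m)" if "m \<ge> 1" for m
    using that by (intro nested_sum_inv_sq_Suc_le nested_sum_inv_sq_le) auto
  then have "(\<Sum>\<^sub>\<infinity>m\<in>{1..}. ennreal (1 / real m) * nested_sum inv_sq (Suc k) m)
      \<le> (\<Sum>\<^sub>\<infinity>m\<in>{1..}. ennreal (1 / real m) * (2 ^ k * ennreal (2 / real m)))"
    by (intro infsum_mono mult_left_mono) auto
  also have "\<dots> = (\<Sum>\<^sub>\<infinity>m\<in>{1..}. 2 ^ Suc k * ennreal (inv_sq m))"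
  proof (rule infsum_cong)
    fix m :: nat
    have "ennreal (1 / real m) * ennreal (2 / real m) = 2 * ennreal (inv_sq m)"
      by (simp add: inv_sq_def power2_eq_square ennreal_mult'' flip: ennreal_numeral ennreal_mult)
    then show "ennreal (1 / real m) * (2 ^ k * ennreal (2 / real m)) = 2 ^ Suc k * ennreal (inv_sq m)"
      by (metis mult.left_commute mult.assoc power_Suc2 mult.commute)
  qed
  also have "\<dots> \<le> 2 ^ Suc k * ennreal (2 / real (1::nat))"
    using infsum_inv_sq_le[of 1] by (simp add: infsum_cmult_right_ennreal mult_left_mono)
  also have "\<dots> < top"
    by (simp add: ennreal_mult_less_top power_less_top_ennreal)
  finally show ?thesis .
qed

lemma infsum_inv_prod_pred_telescoping_le:
  assumes "m \<ge> 3"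
  shows "(\<Sum>\<^sub>\<infinity>n\<in>{m..}. ennreal (2 * inv_prod_pred n * (real n / (real n - 2))))
    \<le> ennreal (2 / (real m - 2))"
proof (rule infsum_telescoping_le_ennreal)
  fix n assume "m \<le> n"
  then have n: "real n \<ge> 3" using assms by linarith
  then have "2 * inv_prod_pred n * (real n / (real n - 2)) = 2 / ((real n - 1) * (real n - 2))"
    by (simp add: inv_prod_pred_def divide_simps)
  also have "\<dots> = 2 / (real n - 2) - 2 / (real n - 1)"
    using n by (simp add: divide_simps)
  finally show "2 * inv_prod_pred n * (real n / (real n - 2))
      \<le> 2 / (real n - 2) - 2 / (real (Suc n) - 2)"
    by simp
  show "0 \<le> 2 * inv_prod_pred n * (real n / (real n - 2))" "0 \<le> 2 / (real n - 2)"
    using n inv_prod_pred_nonneg by simp_all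
qed

lemma sum_pow2_nested_sum_inv_prod_pred_le:
  assumes "m \<ge> 3"
  shows "(\<Sum>k\<le>K. 2 ^ k * nested_sum inv_prod_pred k m) \<le> ennreal (real m / (real m - 2))"
  using assms
proof (induction K arbitrary: m)
  case 0
  then have "1 \<le> real m / (real m - 2)" by (simp add: field_simps)
  then show ?case using ennreal_leI by fastforce
next
  case (Suc K)
  let ?N = "nested_sum inv_prod_pred"
  have m: "real m \<ge> 3" using Suc.prems by simp
  have term_eq: "2 ^ Suc k * ?N (Suc k) m
      = (\<Sum>\<^sub>\<infinity>n\<in>{m..}. ennreal (2 * inv_prod_pred n) * (2 ^ k * ?N k n))" for k
    by (simp add: nested_sum_Suc inv_prod_pred_nonneg ennreal_mult' mult_ac
        flip: infsum_cmult_right_ennreal)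
  have "(\<Sum>k\<le>Suc K. 2 ^ k * ?N k m) = 1 + (\<Sum>k\<le>K. 2 ^ Suc k * ?N (Suc k) m)"
    by (simp only: sum.atMost_Suc_shift) simp
  also have "(\<Sum>k\<le>K. 2 ^ Suc k * ?N (Suc k) m)
      = (\<Sum>\<^sub>\<infinity>n\<in>{m..}. ennreal (2 * inv_prod_pred n) * (\<Sum>k\<le>K. 2 ^ k * ?N k n))"
    by (simp only: term_eq sum_infsum_ennreal sum_distrib_left)
  also have "\<dots> \<le> (\<Sum>\<^sub>\<infinity>n\<in>{m..}. ennreal (2 * inv_prod_pred n * (real n / (real n - 2))))"
  proof (rule infsum_mono)
    fix n assume "n \<in> {m..}"
    then have n: "n \<ge> 3" using Suc.prems by simp
    have "ennreal (2 * inv_prod_pred n) * (\<Sum>k\<le>K. 2 ^ k * ?N k n)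
        \<le> ennreal (2 * inv_prod_pred n) * ennreal (real n / (real n - 2))"
      using Suc.IH[OF n] by (rule mult_left_mono) simp
    also have "\<dots> = ennreal (2 * inv_prod_pred n * (real n / (real n - 2)))"
      using n inv_prod_pred_nonneg by (intro ennreal_mult[symmetric]) auto
    finally show "ennreal (2 * inv_prod_pred n) * (\<Sum>k\<le>K. 2 ^ k * ?N k n)
        \<le> ennreal (2 * inv_prod_pred n * (real n / (real n - 2)))" .
  qed simp_all
  also have "\<dots> \<le> ennreal (2 / (real m - 2))"
    using Suc.prems by (rule infsum_inv_prod_pred_telescoping_le)
  finally have "(\<Sum>k\<le>Suc K. 2 ^ k * ?N k m) \<le> ennreal 1 + ennreal (2 / (real m - 2))"
    by (simp add: add_left_mono)
  also have "\<dots> = ennreal (real m / (real m - 2))"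
    using m by (subst ennreal_plus[symmetric]) (simp_all add: field_simps)
  finally show ?case .
qed

lemma pow2_nested_sum_inv_prod_pred_2:
  "2 ^ s * nested_sum inv_prod_pred s 2 = (\<Sum>k\<le>s. 2 ^ k * nested_sum inv_prod_pred k 3)"
proof (induction s)
  case (Suc s)
  let ?N = "nested_sum inv_prod_pred"
  have "inv_prod_pred 2 = 1 / 2" by (simp add: inv_prod_pred_def)
  then have half: "2 * ennreal (inv_prod_pred 2) = 1"
    by (metis ennreal_1 ennreal_mult' ennreal_numeral nonzero_mult_div_cancel_left
        zero_le_numeral times_divide_eq_right zero_neq_numeral)
  have split: "?N (Suc s) 2 = ennreal (inv_prod_pred 2) * ?N s 2 + ?N (Suc s) 3"
    using nested_sum_Suc_split[of inv_prod_pred s 2] inv_prod_pred_nonneg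
    by (simp add: numeral_3_eq_3)
  have "2 ^ Suc s * ?N (Suc s) 2
      = 2 ^ s * (2 * ennreal (inv_prod_pred 2)) * ?N s 2 + 2 ^ Suc s * ?N (Suc s) 3"
    by (simp add: split distrib_left mult_ac)
  also have "\<dots> = 2 ^ s * ?N s 2 + 2 ^ Suc s * ?N (Suc s) 3"
    by (simp add: half)
  finally show ?case by (simp add: Suc.IH)
qed simp

lemma nested_sum_inv_prod_pred_2_le: "nested_sum inv_prod_pred s 2 \<le> ennreal (3 / 2 ^ s)"
proof -
  have "ennreal (1 / 2 ^ s) * 2 ^ s = 1"
    by (simp add: ennreal_power flip: ennreal_mult ennreal_numeral)
  then have "nested_sum inv_prod_pred s 2 = ennreal (1 / 2 ^ s) * (2 ^ s * nested_sum inv_prod_pred s 2)"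
    by (simp add: mult.assoc[symmetric])
  also have "\<dots> \<le> ennreal (1 / 2 ^ s) * ennreal 3"
    using sum_pow2_nested_sum_inv_prod_pred_le[of 3 s]
    by (intro mult_left_mono) (simp_all add: pow2_nested_sum_inv_prod_pred_2)
  also have "\<dots> = ennreal (3 / 2 ^ s)"
    by (subst ennreal_mult[symmetric]) simp_all
  finally show ?thesis .
qed

lemma infsum_nested_sum_inv_prod_pred_shift_le:
  "(\<Sum>\<^sub>\<infinity>m\<in>{3..}. ennreal (1 / real m) * nested_sum inv_prod_pred s m)
    \<le> (\<Sum>\<^sub>\<infinity>m\<in>{2..}. ennreal (1 / real m) * nested_sum inv_sq s m)"
proof -
  have "{3..} = Suc ` {2::nat..}"
  proof (intro set_eqI iffI)
    fix m :: nat assume "m \<in> {3..}"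
    then show "m \<in> Suc ` {2..}" by (intro image_eqI[of _ _ "m - 1"]) auto
  qed auto
  then have "(\<Sum>\<^sub>\<infinity>m\<in>{3..}. ennreal (1 / real m) * nested_sum inv_prod_pred s m)
      = (\<Sum>\<^sub>\<infinity>m\<in>{2..}. ennreal (1 / real (Suc m)) * nested_sum inv_prod_pred s (Suc m))"
    by (simp add: infsum_reindex o_def)
  also have "\<dots> \<le> (\<Sum>\<^sub>\<infinity>m\<in>{2..}. ennreal (1 / real m) * nested_sum inv_sq s m)"
  proof (rule infsum_mono)
    fix m :: nat assume "m \<in> {2..}"
    then have "ennreal (1 / real (Suc m)) \<le> ennreal (1 / real m)"
      and "nested_sum inv_prod_pred s (Suc m) \<le> nested_sum inv_sq s m"
      by (auto intro!: ennreal_leI frac_le nested_sum_shift_le inv_prod_pred_nonneg inv_prod_pred_Suc_le)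
    then show "ennreal (1 / real (Suc m)) * nested_sum inv_prod_pred s (Suc m)
        \<le> ennreal (1 / real m) * nested_sum inv_sq s m"
      by (rule mult_mono) simp_all
  qed simp_all
  finally show ?thesis .
qed

lemma prodinf_inverse_one_minus_two_over_pronic:
  "(\<Prod>l. 1 / (1 - 2 / (real (l + 3) * (real (l + 3) - 1)))) = (3 :: real)"
proof -
  have factor: "1 / (1 - 2 / (real (l + 3) * (real (l + 3) - 1)))
      = (real l + 3) * (real l + 2) / ((real l + 1) * (real l + 4))" for l
  proof -
    have "1 - 2 / ((real l + 3) * (real l + 2))
        = ((real l + 3) * (real l + 2) - 2) / ((real l + 3) * (real l + 2))"
      by (simp add: diff_divide_distrib)
    also have "(real l + 3) * (real l + 2) - 2 = (real l + 1) * (real l + 4)"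
      by (simp add: algebra_simps)
    finally show ?thesis
      by (simp add: add.commute)
  qed
  have partial: "(\<Prod>l\<le>n. (real l + 3) * (real l + 2) / ((real l + 1) * (real l + 4)))
      = 3 * (real n + 2) / (real n + 4)" for n
  proof (induction n)
    case (Suc n)
    have "x + 2 \<noteq> 0" "x + 4 \<noteq> 0" "x + 5 \<noteq> 0" if "x \<ge> 0" for x :: real
      using that by linarith+
    then have step: "3 * (x + 2) / (x + 4) * ((1 + x + 3) * (1 + x + 2) / ((1 + x + 1) * (1 + x + 4)))
        = 3 * (1 + x + 2) / (1 + x + 4)" if "x \<ge> 0" for x :: real
      using that by (simp add: divide_simps add.assoc) (simp add: algebra_simps)
    show ?case
      by (simp only: prod.atMost_Suc Suc.IH of_nat_Suc) (rule step, simp)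
  qed simp
  have "(\<lambda>n. 3 * (real n + 2) / (real n + 4)) \<longlonglongrightarrow> 3"
    by real_asymp
  then show ?thesis
    unfolding factor partial[symmetric] by (rule prodinf_eq_prod_lim) simp
qed

section \<open>Zeta-star values as nested sums\<close>

lemma zeta_star_dom_eq_dec_lists: "zeta_star_dom k = dec_lists k 1"
  by (auto simp: zeta_star_dom_def dec_lists_def)

lemma zeta_star_nonneg: "zeta_star ks \<ge> 0"
  by (simp add: zeta_star_def infsum_nonneg prod_nonneg)

lemma ennreal_zeta_star:
  assumes "(\<Sum>\<^sub>\<infinity>ns\<in>dec_lists (length ks) 1. ennreal (\<Prod>i<length ks. 1 / real (ns ! i) ^ (ks ! i))) < top"
  shows "ennreal (zeta_star ks)
       = (\<Sum>\<^sub>\<infinity>ns\<in>dec_lists (length ks) 1. ennreal (\<Prod>i<length ks. 1 / real (ns ! i) ^ (ks ! i)))"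
  unfolding zeta_star_def zeta_star_dom_eq_dec_lists
  using assms by (intro ennreal_infsum) (auto intro: prod_nonneg)

lemma infsum_zeta_star_2s:
  "(\<Sum>\<^sub>\<infinity>ns\<in>dec_lists (length (replicate s (2::nat))) 1.
      ennreal (\<Prod>i<length (replicate s (2::nat)). 1 / real (ns ! i) ^ (replicate s 2 ! i)))
    = nested_sum inv_sq s 1"
  by (simp add: nested_sum_def inv_sq_def)

lemma infsum_zeta_star_2s_1:
  "(\<Sum>\<^sub>\<infinity>ns\<in>dec_lists (length (replicate s (2::nat) @ [1])) 1.
      ennreal (\<Prod>i<length (replicate s (2::nat) @ [1]). 1 / real (ns ! i) ^ ((replicate s 2 @ [1]) ! i)))
    = (\<Sum>\<^sub>\<infinity>m\<in>{1..}. ennreal (1 / real m) * nested_sum inv_sq s m)" (is "?lhs = _")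
proof -
  have "(\<Prod>i<s. 1 / real (ns ! i) ^ ((replicate s 2 @ [1]) ! i)) = (\<Prod>i<s. inv_sq (ns ! i))"
    for ns :: "nat list"
    by (intro prod.cong) (auto simp: nth_append inv_sq_def)
  then have "(\<Prod>i<Suc s. 1 / real (ns ! i) ^ ((replicate s 2 @ [1]) ! i))
      = (\<Prod>i<s. inv_sq (ns ! i)) * (1 / real (ns ! s))" for ns :: "nat list"
    by (simp add: nth_append)
  then have "?lhs = (\<Sum>\<^sub>\<infinity>ns\<in>dec_lists (Suc s) 1. ennreal ((\<Prod>i<s. inv_sq (ns ! i)) * (1 / real (ns ! s))))"
    by simp
  also have "\<dots> = (\<Sum>\<^sub>\<infinity>m\<in>{1..}. ennreal (1 / real m) * nested_sum inv_sq s m)"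
    by (rule infsum_dec_lists_Suc_prod) (simp_all add: inv_sq_nonneg)
  finally show ?thesis .
qed

lemma zeta_star_2s_1_minus_zeta_star_2s:
  assumes "s \<ge> 1"
  defines "T \<equiv> (\<Sum>\<^sub>\<infinity>m\<in>{2..}. ennreal (1 / real m) * nested_sum inv_sq s m)"
  shows "T < top" and "zeta_star (replicate s 2 @ [1]) - zeta_star (replicate s 2) = enn2real T"
proof -
  let ?Z1 = "(\<Sum>\<^sub>\<infinity>m\<in>{1..}. ennreal (1 / real m) * nested_sum inv_sq s m)"
  have split: "?Z1 = nested_sum inv_sq s 1 + T"
    using infsum_atLeast_ennreal[of "\<lambda>m. ennreal (1 / real m) * nested_sum inv_sq s m" 1]
    by (simp add: T_def numeral_2_eq_2)
  have finite: "?Z1 < top"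
    using assms infsum_nested_sum_inv_sq_finite[of "s - 1"] by simp
  then have fin: "nested_sum inv_sq s 1 < top" "T < top"
    unfolding split by simp_all
  then show "T < top" by simp
  have "ennreal (zeta_star (replicate s 2 @ [1])) = ?Z1"
    using ennreal_zeta_star[of "replicate s 2 @ [1]", unfolded infsum_zeta_star_2s_1] finite by blast
  then have "zeta_star (replicate s 2 @ [1]) = enn2real (nested_sum inv_sq s 1 + T)"
    by (metis split enn2real_ennreal zeta_star_nonneg)
  also have "\<dots> = enn2real (nested_sum inv_sq s 1) + enn2real T"
    using fin by (simp add: enn2real_plus)
  also have "ennreal (zeta_star (replicate s 2)) = nested_sum inv_sq s 1"
    using ennreal_zeta_star[of "replicate s 2", unfolded infsum_zeta_star_2s] fin(1) by blast
  then have "enn2real (nested_sum inv_sq s 1) = zeta_star (replicate s 2)"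
    by (metis enn2real_ennreal zeta_star_nonneg)
  finally show "zeta_star (replicate s 2 @ [1]) - zeta_star (replicate s 2) = enn2real T"
    by simp
qed

theorem lemma4p1:
  fixes s :: nat
  assumes "s \<ge> 1"
  shows "(\<Sum>\<^sub>\<infinity> ns \<in> {ns :: nat list. length ns = s + 1 \<and> sorted_wrt (\<ge>) ns \<and> ns ! s \<ge> 2}.
            ennreal ((\<Prod>i<s. 1 / (real (ns ! i) * (real (ns ! i) - 1))) * (1 / real (ns ! s))))
         \<le> ennreal (1 / 2 ^ (s + 1) * (\<Prod>l. 1 / (1 - 2 / (real (l + 3) * (real (l + 3) - 1))))
                    + zeta_star (replicate s 2 @ [1]) - zeta_star (replicate s 2))"
proof -
  let ?T = "\<Sum>\<^sub>\<infinity>m\<in>{2..}. ennreal (1 / real m) * nested_sum inv_sq s m"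
  let ?N = "nested_sum inv_prod_pred s"
  have rhs: "1 / 2 ^ (s + 1) * (\<Prod>l. 1 / (1 - 2 / (real (l + 3) * (real (l + 3) - 1))))
      + zeta_star (replicate s 2 @ [1]) - zeta_star (replicate s 2) = 3 / 2 ^ (s + 1) + enn2real ?T"
    using zeta_star_2s_1_minus_zeta_star_2s[OF assms]
    unfolding prodinf_inverse_one_minus_two_over_pronic by (simp add: add_diff_eq[symmetric])
  have "(\<Sum>\<^sub>\<infinity> ns \<in> {ns :: nat list. length ns = s + 1 \<and> sorted_wrt (\<ge>) ns \<and> ns ! s \<ge> 2}.
          ennreal ((\<Prod>i<s. 1 / (real (ns ! i) * (real (ns ! i) - 1))) * (1 / real (ns ! s))))
      = (\<Sum>\<^sub>\<infinity>ns\<in>dec_lists (Suc s) 2. ennreal ((\<Prod>i<s. inv_prod_pred (ns ! i)) * (1 / real (ns ! s))))"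
    by (simp add: dec_lists_Suc_conv_last inv_prod_pred_def)
  also have "\<dots> = (\<Sum>\<^sub>\<infinity>m\<in>{2..}. ennreal (1 / real m) * ?N m)"
    by (rule infsum_dec_lists_Suc_prod) (simp_all add: inv_prod_pred_nonneg)
  also have "\<dots> = ennreal (1 / 2) * ?N 2 + (\<Sum>\<^sub>\<infinity>m\<in>{3..}. ennreal (1 / real m) * ?N m)"
    using infsum_atLeast_ennreal[of "\<lambda>m. ennreal (1 / real m) * ?N m" 2] by simp
  also have "\<dots> \<le> ennreal (1 / 2) * ennreal (3 / 2 ^ s) + ?T"
    by (intro add_mono mult_left_mono nested_sum_inv_prod_pred_2_le
        infsum_nested_sum_inv_prod_pred_shift_le) simp
  also have "\<dots> = ennreal (3 / 2 ^ (s + 1) + enn2real ?T)"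
    using zeta_star_2s_1_minus_zeta_star_2s(1)[OF assms]
    by (subst ennreal_mult[symmetric]) (simp_all add: ennreal_plus)
  finally show ?thesis
    unfolding rhs .
qed

end
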